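(* Let $\delta>0$, $\gamma>0$ and let $\bar{\mathcal X}^{\delta,\gamma}(t)=\bar M(I_{\delta,\gamma}(t))$. Its state probabilities $p_{\bar{\mathcal X}}(\bar n,t)=\Pr\{\bar{\mathcal X}^{\delta,\gamma}(t)=\bar n\}$, $\bar n\in\mathbb{N}_0^q$, satisfy $$\Big(\frac{\partial^2}{\partial t^2}-2\delta\gamma\frac{\partial}{\partial t}\Big)p_{\bar{\mathcal X}}(\bar n,t)=2\delta^2\lambda\,p_{\bar{\mathcal X}}(\bar n,t)-2\delta^2\sum_{i=1}^q\sum_{j=1}^{k_i}\lambda_{ij}\,p_{\bar{\mathcal X}}(\bar n-\bar\epsilon_i^{j},t).$$
   Context: Fix $q\ge1$, integers $k_1,\dots,k_q\ge1$, $\lambda_{ij}>0$ ($1\le i\le q$, $1\le j\le k_i$), $\lambda=\sum_{i,j}\lambda_{ij}$. The MGCP $\bar M(t)=(M_1(t),\dots,M_q(t))$ is the $\mathbb{N}_0^q$-valued process with $\bar M(0)=\bar0$, independent stationary increments and transition probabilities $\Pr\{\bar M(t+h)=\bar n+\bar j\mid\bar M(t)=\bar n\}=\lambda_{ij}h+o(h)$ if $\bar j=\bar\epsilon_i^{j}$, $1-\lambda h+o(h)$ if $\bar j=\bar0$, $o(h)$ otherwise, where $\bar\epsilon_i^{j}\in\mathbb{N}_0^q$ has $i$th entry $j$ and other entries $0$. $\{I_{\delta,\gamma}(t)\}$ is an inverse Gaussian subordinator independent of $\bar M$, with density $g(x,t)=\frac{\delta t}{\sqrt{2\pi x^3}}\exp\big(\delta\gamma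 t-\frac12(\delta^2t^2x^{-1}+\gamma^2x)\big)$, $x>0$, and $\mathbb{E}e^{-sI_{\delta,\gamma}(t)}=\exp(-\delta t(\sqrt{2s+\gamma^2}-\gamma))$. Convention: $p_{\bar{\mathcal X}}(\bar n-\bar m,t)=0$ if some component of $\bar n-\bar m$ is negative. *)

theory Defs
  imports "HOL-Analysis.Analysis"
begin

text \<open>Indices: components i range over {0..<q} (paper: 1..q); jump sizes j range over {1..k i}.
  Vectors in N_0^q are functions nat => nat of which only the entries i < q matter.\<close>

text \<open>Admissible jump-count vectors for a generalized counting process with jumps 1..kk
  reaching level m: x j counts jumps of size j.\<close>
definition gcp_omega :: "nat \<Rightarrow> nat \<Rightarrow> (nat \<Rightarrow> nat) set" where
  "gcp_omega kk m = {x. (\<forall>j. j \<notin> {1..kk} \<longrightarrow> x j = 0) \<and> (\<Sum>j=1..kk. j * x j) = m}"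

text \<open>State probability of the i-th component M_i(t) (a generalized counting process:
  M_i = sum_j j N_ij with independent Poisson N_ij of rates lam i j).\<close>
definition gcp_pmf :: "nat \<Rightarrow> (nat \<Rightarrow> real) \<Rightarrow> nat \<Rightarrow> real \<Rightarrow> real" where
  "gcp_pmf kk lam m t =
     (\<Sum>x\<in>gcp_omega kk m. \<Prod>j=1..kk. (lam j * t) ^ x j / fact (x j) * exp (- lam j * t))"

definition mgcp_pmf :: "nat \<Rightarrow> (nat \<Rightarrow> nat) \<Rightarrow> (nat \<Rightarrow> nat \<Rightarrow> real) \<Rightarrow> (nat \<Rightarrow> nat) \<Rightarrow> real \<Rightarrow> real" where
  "mgcp_pmf q k lam n t = (\<Prod>i<q. gcp_pmf (k i) (lam i) (n i) t)"

definition ig_density :: "real \<Rightarrow> real \<Rightarrow> real \<Rightarrow> real \<Rightarrow> real" where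
  "ig_density \<delta> \<gamma> x t =
     \<delta> * t / sqrt (2 * pi * x ^ 3) * exp (\<delta> * \<gamma> * t - (\<delta>\<^sup>2 * t\<^sup>2 / x + \<gamma>\<^sup>2 * x) / 2)"

text \<open>State probabilities of the time-changed process M(I(t)), with I independent of M:
  p_X(n,t) = int_0^infty p_M(n,x) g(x,t) dx.\<close>
definition tc_pmf :: "nat \<Rightarrow> (nat \<Rightarrow> nat) \<Rightarrow> (nat \<Rightarrow> nat \<Rightarrow> real) \<Rightarrow> real \<Rightarrow> real \<Rightarrow> (nat \<Rightarrow> nat) \<Rightarrow> real \<Rightarrow> real" where
  "tc_pmf q k lam \<delta> \<gamma> n t =
     (LINT x:{0<..}|lborel. mgcp_pmf q k lam n x * ig_density \<delta> \<gamma> x t)"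

definition tc_pmf_shift :: "nat \<Rightarrow> (nat \<Rightarrow> nat) \<Rightarrow> (nat \<Rightarrow> nat \<Rightarrow> real) \<Rightarrow> real \<Rightarrow> real \<Rightarrow> (nat \<Rightarrow> nat) \<Rightarrow> nat \<Rightarrow> nat \<Rightarrow> real \<Rightarrow> real" where
  "tc_pmf_shift q k lam \<delta> \<gamma> n i j t =
     (if j \<le> n i then tc_pmf q k lam \<delta> \<gamma> (n(i := n i - j)) t else 0)"

end

theory Submission
  imports Defs "HOL-Real_Asymp.Real_Asymp"
begin

text \<open>
  Conditioning on the subordinator gives p_X(n,t) = \<integral>_0^\<infinity> p_M(n,x) g(x,t) dx. The inverse
  Gaussian density solves g_tt - 2\<delta>\<gamma> g_t = 2\<delta>^2 g_x, and p_M solves the Kolmogorov forward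
  equation \<partial>_x p_M(n,x) = \<Sum> \<lambda>_ij p_M(n - \<epsilon>_i^j, x) - \<lambda> p_M(n,x). Differentiating twice under
  the integral sign (for t in a compact subset of (0,\<infinity>), g and its derivatives are bounded by
  K exp(-\<gamma>^2 x/2), and p_M is bounded) and integrating by parts in x (the boundary terms vanish
  because g(x,t) \<rightarrow> 0 as x \<rightarrow> 0+ and as x \<rightarrow> \<infinity>) turns the PDE for g into the equation for p_X.
\<close>

section \<open>The forward equation of the multivariate generalized counting process\<close>

lemma finite_gcp_omega: "finite (gcp_omega kk m)"
proof (rule finite_subset)
  let ?F = "{f. \<forall>j. (j \<in> {1..kk} \<longrightarrow> f j \<in> {0..m}) \<and> (j \<notin> {1..kk} \<longrightarrow> f j = 0)}"
  show "gcp_omega kk m \<subseteq> ?F"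
  proof
    fix f assume f: "f \<in> gcp_omega kk m"
    have "f j \<le> m" if "j \<in> {1..kk}" for j
    proof -
      have "f j \<le> j * f j" using that by simp
      also have "\<dots> \<le> (\<Sum>l=1..kk. l * f l)" using that by (intro member_le_sum) auto
      finally show ?thesis using f by (simp add: gcp_omega_def)
    qed
    then show "f \<in> ?F" using f by (auto simp: gcp_omega_def)
  qed
  show "finite ?F" by (rule finite_set_of_finite_funs) auto
qed

lemma sum_weighted_fun_upd:
  fixes y :: "nat \<Rightarrow> nat"
  assumes "j \<in> {1..kk}"
  shows "(\<Sum>l=1..kk. l * (y(j := v)) l) + j * y j = (\<Sum>l=1..kk. l * y l) + j * v"
proof -
  have "(\<Sum>l=1..kk. l * (y(j := v)) l) = j * v + (\<Sum>l\<in>{1..kk}-{j}. l * (y(j := v)) l)"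
    using assms by (subst sum.remove[of _ j]) auto
  also have "(\<Sum>l\<in>{1..kk}-{j}. l * (y(j := v)) l) = (\<Sum>l\<in>{1..kk}-{j}. l * y l)"
    by (rule sum.cong) auto
  moreover have "(\<Sum>l=1..kk. l * y l) = j * y j + (\<Sum>l\<in>{1..kk}-{j}. l * y l)"
    using assms by (subst sum.remove[of _ j]) auto
  ultimately show ?thesis by simp
qed

lemma bij_betw_gcp_omega_increment:
  assumes j: "j \<in> {1..kk}" and "j \<le> m"
  shows "bij_betw (\<lambda>y. y(j := Suc (y j))) (gcp_omega kk (m - j)) {x \<in> gcp_omega kk m. 1 \<le> x j}"
proof (rule bij_betwI[where g = "\<lambda>x. x(j := x j - 1)"])
  show "(\<lambda>y. y(j := Suc (y j))) \<in> gcp_omega kk (m - j) \<rightarrow> {x \<in> gcp_omega kk m. 1 \<le> x j}"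
  proof
    fix y assume y: "y \<in> gcp_omega kk (m - j)"
    have "(\<Sum>l=1..kk. l * (y(j := Suc (y j))) l) + j * y j = (m - j) + j * Suc (y j)"
      using sum_weighted_fun_upd[OF j] y by (simp add: gcp_omega_def)
    then have "(\<Sum>l=1..kk. l * (y(j := Suc (y j))) l) = m"
      using \<open>j \<le> m\<close> by simp
    then show "y(j := Suc (y j)) \<in> {x \<in> gcp_omega kk m. 1 \<le> x j}"
      using y j by (auto simp: gcp_omega_def)
  qed
  show "(\<lambda>x. x(j := x j - 1)) \<in> {x \<in> gcp_omega kk m. 1 \<le> x j} \<rightarrow> gcp_omega kk (m - j)"
  proof
    fix x assume x: "x \<in> {x \<in> gcp_omega kk m. 1 \<le> x j}"
    have "(\<Sum>l=1..kk. l * (x(j := x j - 1)) l) + j * x j = m + j * (x j - 1)"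
      using sum_weighted_fun_upd[OF j] x by (simp add: gcp_omega_def)
    then have "(\<Sum>l=1..kk. l * (x(j := x j - 1)) l) = m - j"
      using x by (simp add: algebra_simps diff_mult_distrib2)
    then show "x(j := x j - 1) \<in> gcp_omega kk (m - j)"
      using x j by (auto simp: gcp_omega_def)
  qed
qed auto

lemma gcp_omega_large_jump_empty:
  assumes "j \<in> {1..kk}" and "m < j"
  shows "{x \<in> gcp_omega kk m. 1 \<le> x j} = {}"
proof -
  have "j \<le> m" if "x \<in> gcp_omega kk m" "1 \<le> x j" for x
  proof -
    have "j \<le> j * x j" using that by simp
    also have "\<dots> \<le> (\<Sum>l=1..kk. l * x l)" using assms by (intro member_le_sum) auto
    finally show ?thesis using that by (simp add: gcp_omega_def)
  qed
  then show ?thesis using assms by force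
qed

lemma sum_gcp_omega_decrement:
  assumes "j \<in> {1..kk}"
  shows "(\<Sum>x\<in>gcp_omega kk m. if 1 \<le> x j then G (x(j := x j - 1)) else 0)
       = (if j \<le> m then \<Sum>y\<in>gcp_omega kk (m - j). G y else 0)"
proof -
  have "(\<Sum>x\<in>gcp_omega kk m. if 1 \<le> x j then G (x(j := x j - 1)) else 0)
      = (\<Sum>x\<in>{x \<in> gcp_omega kk m. 1 \<le> x j}. G (x(j := x j - 1)))"
    by (rule sum.inter_filter[symmetric, OF finite_gcp_omega])
  also have "\<dots> = (if j \<le> m then \<Sum>y\<in>gcp_omega kk (m - j). G y else 0)"
  proof (cases "j \<le> m")
    case True
    show ?thesis
      using sum.reindex_bij_betw[OF bij_betw_gcp_omega_increment[OF assms True],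
          of "\<lambda>x. G (x(j := x j - 1))"] True by simp
  next
    case False
    then have "{x \<in> gcp_omega kk m. 1 \<le> x j} = {}"
      by (intro gcp_omega_large_jump_empty[OF assms]) simp
    then show ?thesis using False by (simp only: sum.empty) simp
  qed
  finally show ?thesis .
qed

definition poisson_prob :: "real \<Rightarrow> nat \<Rightarrow> real" where
  "poisson_prob y r = y ^ r / fact r * exp (- y)"

lemma poisson_prob_has_derivative:
  "((\<lambda>t. poisson_prob (c * t) r) has_real_derivative
     c * ((if r = 0 then 0 else poisson_prob (c * t) (r - 1)) - poisson_prob (c * t) r)) (at t)"
proof (cases r)
  case 0
  then show ?thesis
    unfolding poisson_prob_def by (auto intro!: derivative_eq_intros)
next
  case (Suc s)
  have "((\<lambda>t. (c * t) ^ Suc s) has_real_derivative (1 + real s) * (c * (c * t) ^ s)) (at t)"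
    by (rule DERIV_power_Suc) (auto intro!: derivative_eq_intros)
  from DERIV_cdivide[OF this, of "fact (Suc s)"]
  have power: "((\<lambda>t. (c * t) ^ Suc s / fact (Suc s)) has_real_derivative c * (c * t) ^ s / fact s) (at t)"
    by (simp add: fact_Suc add.commute)
  have decay: "((\<lambda>t. exp (- (c * t))) has_real_derivative exp (- (c * t)) * (- c)) (at t)"
    by (auto intro!: derivative_eq_intros)
  show ?thesis
    unfolding poisson_prob_def Suc
    by (rule DERIV_cong[OF DERIV_mult[OF power decay]]) (simp add: algebra_simps)
qed

definition jump_counts_prob :: "nat \<Rightarrow> (nat \<Rightarrow> real) \<Rightarrow> (nat \<Rightarrow> nat) \<Rightarrow> real \<Rightarrow> real" where
  "jump_counts_prob kk lam x t = (\<Prod>j=1..kk. poisson_prob (lam j * t) (x j))"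

lemma gcp_pmf_eq_sum_jump_counts_prob: "gcp_pmf kk lam m t = (\<Sum>x\<in>gcp_omega kk m. jump_counts_prob kk lam x t)"
  unfolding gcp_pmf_def jump_counts_prob_def poisson_prob_def by simp

lemma jump_counts_prob_fun_upd:
  assumes "j \<in> {1..kk}"
  shows "jump_counts_prob kk lam (x(j := v)) t
       = poisson_prob (lam j * t) v * (\<Prod>l\<in>{1..kk}-{j}. poisson_prob (lam l * t) (x l))"
proof -
  have "(\<Prod>l\<in>{1..kk}-{j}. poisson_prob (lam l * t) ((x(j := v)) l))
      = (\<Prod>l\<in>{1..kk}-{j}. poisson_prob (lam l * t) (x l))"
    by (rule prod.cong) auto
  then show ?thesis
    unfolding jump_counts_prob_def using assms by (subst prod.remove[of _ j]) auto
qed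

lemma jump_counts_prob_has_derivative:
  "((\<lambda>t. jump_counts_prob kk lam x t) has_real_derivative
     (\<Sum>j=1..kk. lam j * (if 1 \<le> x j then jump_counts_prob kk lam (x(j := x j - 1)) t else 0))
     - (\<Sum>j=1..kk. lam j) * jump_counts_prob kk lam x t) (at t)"
proof -
  let ?rest = "\<lambda>j. \<Prod>l\<in>{1..kk}-{j}. poisson_prob (lam l * t) (x l)"
  have "((\<lambda>t. jump_counts_prob kk lam x t) has_real_derivative
      (\<Sum>j=1..kk. lam j * ((if x j = 0 then 0 else poisson_prob (lam j * t) (x j - 1))
                             - poisson_prob (lam j * t) (x j)) * ?rest j)) (at t)"
    unfolding jump_counts_prob_def by (rule has_field_derivative_prod) (rule poisson_prob_has_derivative)
  moreover have "lam j * ((if x j = 0 then 0 else poisson_prob (lam j * t) (x j - 1))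
                   - poisson_prob (lam j * t) (x j)) * ?rest j
      = lam j * (if 1 \<le> x j then jump_counts_prob kk lam (x(j := x j - 1)) t else 0) - lam j * jump_counts_prob kk lam x t"
    if "j \<in> {1..kk}" for j
  proof -
    have "jump_counts_prob kk lam x t = poisson_prob (lam j * t) (x j) * ?rest j"
      using jump_counts_prob_fun_upd[OF that, where x = x and v = "x j"] by simp
    then show ?thesis
      using jump_counts_prob_fun_upd[OF that, where x = x and v = "x j - 1"] by (simp add: algebra_simps)
  qed
  ultimately show ?thesis
    by (simp add: sum_subtractf sum_distrib_right)
qed

lemma gcp_pmf_has_derivative:
  "(gcp_pmf kk lam m has_real_derivative
     (\<Sum>j=1..kk. lam j * (if j \<le> m then gcp_pmf kk lam (m - j) t else 0))
     - (\<Sum>j=1..kk. lam j) * gcp_pmf kk lam m t) (at t)"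
proof -
  let ?jump = "\<lambda>j x. if 1 \<le> x j then jump_counts_prob kk lam (x(j := x j - 1)) t else 0"
  have "(gcp_pmf kk lam m has_real_derivative
     (\<Sum>x\<in>gcp_omega kk m. (\<Sum>j=1..kk. lam j * ?jump j x) - (\<Sum>j=1..kk. lam j) * jump_counts_prob kk lam x t)) (at t)"
    unfolding gcp_pmf_eq_sum_jump_counts_prob[abs_def] by (intro DERIV_sum jump_counts_prob_has_derivative)
  also have "(\<Sum>x\<in>gcp_omega kk m. (\<Sum>j=1..kk. lam j * ?jump j x) - (\<Sum>j=1..kk. lam j) * jump_counts_prob kk lam x t)
      = (\<Sum>j=1..kk. lam j * (\<Sum>x\<in>gcp_omega kk m. ?jump j x)) - (\<Sum>j=1..kk. lam j) * gcp_pmf kk lam m t"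
    by (simp add: sum_subtractf sum_distrib_left gcp_pmf_eq_sum_jump_counts_prob sum.swap[of _ "gcp_omega kk m"])
  also have "(\<Sum>j=1..kk. lam j * (\<Sum>x\<in>gcp_omega kk m. ?jump j x))
      = (\<Sum>j=1..kk. lam j * (if j \<le> m then gcp_pmf kk lam (m - j) t else 0))"
  proof (rule sum.cong[OF refl])
    fix j assume "j \<in> {1..kk}"
    from sum_gcp_omega_decrement[OF this, where m = m and G = "\<lambda>y. jump_counts_prob kk lam y t"]
    show "lam j * (\<Sum>x\<in>gcp_omega kk m. ?jump j x) = lam j * (if j \<le> m then gcp_pmf kk lam (m - j) t else 0)"
      by (simp add: gcp_pmf_eq_sum_jump_counts_prob)
  qed
  finally show ?thesis .
qed

definition mgcp_pmf_deriv ::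
    "nat \<Rightarrow> (nat \<Rightarrow> nat) \<Rightarrow> (nat \<Rightarrow> nat \<Rightarrow> real) \<Rightarrow> (nat \<Rightarrow> nat) \<Rightarrow> real \<Rightarrow> real" where
  "mgcp_pmf_deriv q k lam n t =
     (\<Sum>i<q. \<Sum>j=1..k i. lam i j * (if j \<le> n i then mgcp_pmf q k lam (n(i := n i - j)) t else 0))
     - (\<Sum>i<q. \<Sum>j=1..k i. lam i j) * mgcp_pmf q k lam n t"

lemma mgcp_pmf_fun_upd:
  assumes "i < q"
  shows "mgcp_pmf q k lam (n(i := v)) t
       = gcp_pmf (k i) (lam i) v t * (\<Prod>l\<in>{..<q}-{i}. gcp_pmf (k l) (lam l) (n l) t)"
proof -
  have "(\<Prod>l\<in>{..<q}-{i}. gcp_pmf (k l) (lam l) ((n(i := v)) l) t)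
      = (\<Prod>l\<in>{..<q}-{i}. gcp_pmf (k l) (lam l) (n l) t)"
    by (rule prod.cong) auto
  then show ?thesis
    unfolding mgcp_pmf_def using assms by (subst prod.remove[of _ i]) auto
qed

lemma mgcp_pmf_has_derivative:
  "(mgcp_pmf q k lam n has_real_derivative mgcp_pmf_deriv q k lam n t) (at t)"
proof -
  let ?rest = "\<lambda>i. \<Prod>l\<in>{..<q}-{i}. gcp_pmf (k l) (lam l) (n l) t"
  let ?jump = "\<lambda>i j. if j \<le> n i then mgcp_pmf q k lam (n(i := n i - j)) t else 0"
  have "(mgcp_pmf q k lam n has_real_derivative
      (\<Sum>i<q. ((\<Sum>j=1..k i. lam i j * (if j \<le> n i then gcp_pmf (k i) (lam i) (n i - j) t else 0))
               - (\<Sum>j=1..k i. lam i j) * gcp_pmf (k i) (lam i) (n i) t) * ?rest i)) (at t)"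
    unfolding mgcp_pmf_def[abs_def] by (rule has_field_derivative_prod) (rule gcp_pmf_has_derivative)
  also have "(\<Sum>i<q. ((\<Sum>j=1..k i. lam i j * (if j \<le> n i then gcp_pmf (k i) (lam i) (n i - j) t else 0))
               - (\<Sum>j=1..k i. lam i j) * gcp_pmf (k i) (lam i) (n i) t) * ?rest i)
      = (\<Sum>i<q. (\<Sum>j=1..k i. lam i j * ?jump i j) - (\<Sum>j=1..k i. lam i j) * mgcp_pmf q k lam n t)"
  proof (rule sum.cong[OF refl])
    fix i assume "i \<in> {..<q}"
    then have i: "i < q" by simp
    have "mgcp_pmf q k lam n t = gcp_pmf (k i) (lam i) (n i) t * ?rest i"
      using mgcp_pmf_fun_upd[OF i, where n = n and v = "n i"] by simp
    moreover have "(if j \<le> n i then gcp_pmf (k i) (lam i) (n i - j) t else 0) * ?rest i = ?jump i j" for j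
      using mgcp_pmf_fun_upd[OF i, where n = n and v = "n i - j"] by simp
    ultimately show "((\<Sum>j=1..k i. lam i j * (if j \<le> n i then gcp_pmf (k i) (lam i) (n i - j) t else 0))
               - (\<Sum>j=1..k i. lam i j) * gcp_pmf (k i) (lam i) (n i) t) * ?rest i
      = (\<Sum>j=1..k i. lam i j * ?jump i j) - (\<Sum>j=1..k i. lam i j) * mgcp_pmf q k lam n t"
      by (simp add: left_diff_distrib sum_distrib_right mult.assoc)
  qed
  also have "\<dots> = mgcp_pmf_deriv q k lam n t"
    unfolding mgcp_pmf_deriv_def by (simp add: sum_subtractf sum_distrib_right)
  finally show ?thesis .
qed

lemma pow_div_fact_le_exp:
  fixes y :: real
  assumes "0 \<le> y"
  shows "y ^ r / fact r \<le> exp y"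
proof -
  have "y ^ r / fact r = (\<Sum>n\<in>{r}. y ^ n /\<^sub>R fact n)" by (simp add: divide_inverse_commute)
  also have "\<dots> \<le> (\<Sum>n. y ^ n /\<^sub>R fact n)"
    using assms by (intro sum_le_suminf summable_exp_generic) auto
  also have "\<dots> = exp y" by (simp add: exp_def)
  finally show ?thesis .
qed

lemma poisson_prob_nonneg: "0 \<le> y \<Longrightarrow> 0 \<le> poisson_prob y r"
  unfolding poisson_prob_def by simp

lemma poisson_prob_le_one:
  assumes "0 \<le> y"
  shows "poisson_prob y r \<le> 1"
proof -
  have "y ^ r / fact r * exp (- y) \<le> exp y * exp (- y)"
    using pow_div_fact_le_exp[OF assms] by (rule mult_right_mono) simp
  then show ?thesis unfolding poisson_prob_def by (simp add: exp_minus_inverse)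
qed

lemma abs_gcp_pmf_le_card:
  assumes "\<And>j. j \<in> {1..kk} \<Longrightarrow> 0 \<le> lam j" and "0 \<le> t"
  shows "\<bar>gcp_pmf kk lam m t\<bar> \<le> card (gcp_omega kk m)"
proof -
  have prob_bounds: "0 \<le> jump_counts_prob kk lam x t \<and> jump_counts_prob kk lam x t \<le> 1" for x
    unfolding jump_counts_prob_def using assms
    by (auto intro!: prod_nonneg prod_le_1 poisson_prob_nonneg poisson_prob_le_one)
  then have "0 \<le> gcp_pmf kk lam m t"
    unfolding gcp_pmf_eq_sum_jump_counts_prob by (auto intro!: sum_nonneg)
  moreover have "gcp_pmf kk lam m t \<le> (\<Sum>x\<in>gcp_omega kk m. 1)"
    unfolding gcp_pmf_eq_sum_jump_counts_prob using prob_bounds by (intro sum_mono) auto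
  ultimately show ?thesis by simp
qed

lemma mgcp_pmf_bounded:
  assumes "\<forall>i<q. \<forall>j\<in>{1..k i}. 0 \<le> lam i j"
  shows "\<exists>B. \<forall>t\<ge>0. \<bar>mgcp_pmf q k lam n t\<bar> \<le> B"
proof (intro exI allI impI)
  fix t :: real assume "0 \<le> t"
  then show "\<bar>mgcp_pmf q k lam n t\<bar> \<le> (\<Prod>i<q. real (card (gcp_omega (k i) (n i))))"
    unfolding mgcp_pmf_def abs_prod using assms
    by (intro prod_mono) (auto intro: abs_gcp_pmf_le_card)
qed

lemma isCont_mgcp_pmf: "isCont (mgcp_pmf q k lam n) t"
  using mgcp_pmf_has_derivative by (rule DERIV_isCont)

lemma isCont_mgcp_pmf_deriv: "isCont (mgcp_pmf_deriv q k lam n) t"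
proof -
  have "isCont (\<lambda>t. if j \<le> n i then mgcp_pmf q k lam (n(i := n i - j)) t else 0) t" for i j
    by (cases "j \<le> n i") (simp_all add: isCont_mgcp_pmf)
  then show ?thesis
    unfolding mgcp_pmf_deriv_def[abs_def] by (intro continuous_intros isCont_mgcp_pmf)
qed

lemma borel_measurable_mgcp_pmf [measurable]: "mgcp_pmf q k lam n \<in> borel_measurable lborel"
  by (simp add: continuous_at_imp_continuous_on isCont_mgcp_pmf borel_measurable_continuous_onI)

section \<open>The inverse Gaussian kernel\<close>

definition ig_dt :: "real \<Rightarrow> real \<Rightarrow> real \<Rightarrow> real \<Rightarrow> real" where
  "ig_dt \<delta> \<gamma> x t = ig_density \<delta> \<gamma> x t * (1/t + \<delta>*\<gamma> - \<delta>\<^sup>2*t/x)"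

definition ig_dtt :: "real \<Rightarrow> real \<Rightarrow> real \<Rightarrow> real \<Rightarrow> real" where
  "ig_dtt \<delta> \<gamma> x t = ig_density \<delta> \<gamma> x t * ((1/t + \<delta>*\<gamma> - \<delta>\<^sup>2*t/x)\<^sup>2 - 1/t\<^sup>2 - \<delta>\<^sup>2/x)"

definition ig_dx :: "real \<Rightarrow> real \<Rightarrow> real \<Rightarrow> real \<Rightarrow> real" where
  "ig_dx \<delta> \<gamma> x t = ig_density \<delta> \<gamma> x t * (-3/(2*x) + \<delta>\<^sup>2*t\<^sup>2/(2*x\<^sup>2) - \<gamma>\<^sup>2/2)"

lemma ig_density_has_derivative_t:
  assumes "0 < x" "0 < t"
  shows "((\<lambda>t. ig_density \<delta> \<gamma> x t) has_real_derivative ig_dt \<delta> \<gamma> x t) (at t)"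
proof -
  define C where "C = 1 / sqrt (2 * pi * x ^ 3)"
  have ig: "ig_density \<delta> \<gamma> x s = \<delta> * s * C * exp (\<delta> * \<gamma> * s - (\<delta>\<^sup>2 * s\<^sup>2 / x + \<gamma>\<^sup>2 * x) / 2)" for s
    unfolding ig_density_def C_def by simp
  show ?thesis
    unfolding ig_dt_def ig using assms
    by (auto intro!: derivative_eq_intros simp: field_simps power2_eq_square)
qed

lemma ig_dt_has_derivative_t:
  assumes "0 < x" "0 < t"
  shows "((\<lambda>t. ig_dt \<delta> \<gamma> x t) has_real_derivative ig_dtt \<delta> \<gamma> x t) (at t)"
  unfolding ig_dt_def[abs_def] ig_dtt_def using assms
  by (auto intro!: derivative_eq_intros ig_density_has_derivative_t
      simp: ig_dt_def field_simps power2_eq_square)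

lemma ig_density_has_derivative_x:
  assumes "0 < x"
  shows "((\<lambda>x. ig_density \<delta> \<gamma> x t) has_real_derivative ig_dx \<delta> \<gamma> x t) (at x)"
proof -
  define C where "C = (\<lambda>x::real. 1 / sqrt (2 * pi * x ^ 3))"
  have ig: "ig_density \<delta> \<gamma> y t = \<delta> * t * C y * exp (\<delta> * \<gamma> * t - (\<delta>\<^sup>2 * t\<^sup>2 / y + \<gamma>\<^sup>2 * y) / 2)" for y
    unfolding ig_density_def C_def by simp
  have "(C has_real_derivative - 3 / (2 * x) * C x) (at x)"
    unfolding C_def using assms
    by (auto intro!: derivative_eq_intros simp: field_simps power3_eq_cube mult_less_0_iff)
  then show ?thesis
    unfolding ig_dx_def ig using assms
    by (auto intro!: derivative_eq_intros simp: field_simps power2_eq_square)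
qed

lemma isCont_ig_density_x: "0 < x \<Longrightarrow> isCont (\<lambda>x. ig_density \<delta> \<gamma> x t) x"
  by (rule DERIV_isCont[OF ig_density_has_derivative_x])

lemma isCont_ig_dx: "0 < x \<Longrightarrow> isCont (\<lambda>x. ig_dx \<delta> \<gamma> x t) x"
  unfolding ig_dx_def by (intro continuous_intros isCont_ig_density_x) auto

lemma ig_density_pde:
  assumes "0 < x" "0 < t"
  shows "ig_dtt \<delta> \<gamma> x t - 2 * \<delta> * \<gamma> * ig_dt \<delta> \<gamma> x t = 2 * \<delta>\<^sup>2 * ig_dx \<delta> \<gamma> x t"
  unfolding ig_dtt_def ig_dt_def ig_dx_def using assms by (simp add: field_simps power2_eq_square)

lemma ig_density_nonneg: "0 \<le> \<delta> \<Longrightarrow> 0 \<le> t \<Longrightarrow> 0 \<le> x \<Longrightarrow> 0 \<le> ig_density \<delta> \<gamma> x t"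
  unfolding ig_density_def by simp

lemma ig_density_tendsto_0_at_right:
  "0 < \<delta> \<Longrightarrow> 0 < t \<Longrightarrow> ((\<lambda>x. ig_density \<delta> \<gamma> x t) \<longlongrightarrow> 0) (at_right 0)"
  unfolding ig_density_def by real_asymp

lemma ig_density_tendsto_0_at_top: "0 < \<gamma> \<Longrightarrow> ((\<lambda>x. ig_density \<delta> \<gamma> x t) \<longlongrightarrow> 0) at_top"
  unfolding ig_density_def by real_asymp

lemma borel_measurable_ig_density [measurable]: "(\<lambda>x. ig_density \<delta> \<gamma> x t) \<in> borel_measurable lborel"
  unfolding ig_density_def by measurable

lemma borel_measurable_ig_dt [measurable]: "(\<lambda>x. ig_dt \<delta> \<gamma> x t) \<in> borel_measurable lborel"
  unfolding ig_dt_def by measurable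

lemma borel_measurable_ig_dtt [measurable]: "(\<lambda>x. ig_dtt \<delta> \<gamma> x t) \<in> borel_measurable lborel"
  unfolding ig_dtt_def by measurable

lemma borel_measurable_ig_dx [measurable]: "(\<lambda>x. ig_dx \<delta> \<gamma> x t) \<in> borel_measurable lborel"
  unfolding ig_dx_def by measurable

lemma one_plus_pow4_exp_le:
  fixes c u :: real
  assumes "0 < c" "0 \<le> u"
  shows "(1 + u) ^ 4 * exp (- c * u) \<le> 1 / min 1 (c / 4) ^ 4"
proof -
  define m where "m = min 1 (c / 4)"
  have m: "0 < m" "m \<le> 1" "m \<le> c / 4" using assms(1) by (auto simp: m_def)
  have "m * (1 + u) \<le> 1 + c * u / 4"
    using m mult_right_mono[OF m(3) assms(2)] by (simp add: algebra_simps)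
  also have "\<dots> \<le> exp (c * u / 4)" using exp_ge_add_one_self[of "c * u / 4"] by simp
  finally have "(m * (1 + u)) ^ 4 \<le> exp (c * u / 4) ^ 4"
    using m assms by (intro power_mono) auto
  also have "\<dots> = exp (c * u)" by (simp flip: exp_of_nat_mult)
  finally have "m ^ 4 * (1 + u) ^ 4 \<le> exp (c * u)"
    by (simp only: power_mult_distrib)
  then have "(1 + u) ^ 4 \<le> exp (c * u) / m ^ 4"
    using m by (simp add: pos_le_divide_eq mult.commute)
  then have "(1 + u) ^ 4 * exp (- c * u) \<le> exp (c * u) / m ^ 4 * exp (- c * u)"
    by (rule mult_right_mono) simp
  also have "\<dots> = 1 / m ^ 4" by (simp add: exp_minus field_simps)
  finally show ?thesis by (simp add: m_def)
qed

lemma inverse_sqrt_cube_le: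
  fixes x :: real
  assumes "0 < x"
  shows "1 / sqrt (2 * pi * x ^ 3) \<le> (1 + 1 / x)\<^sup>2"
proof -
  have "1 / sqrt (2 * pi * x ^ 3) \<le> 1 / sqrt (x ^ 3)"
    using assms pi_gt3 by (intro divide_left_mono real_sqrt_le_mono mult_right_mono mult_pos_pos) auto
  also have "\<dots> \<le> (1 + 1 / x)\<^sup>2"
  proof (cases "1 \<le> x")
    case True
    then have "1 / sqrt (x ^ 3) \<le> 1" by simp
    also have "1 \<le> (1 + 1 / x)\<^sup>2" using assms by simp
    finally show ?thesis .
  next
    case False
    have "x\<^sup>2 = sqrt (x ^ 4)"
      using real_sqrt_abs[of "x\<^sup>2"] by (simp flip: power_mult)
    also have "\<dots> \<le> sqrt (x ^ 3)" using False assms by (simp add: power_decreasing)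
    finally have "1 / sqrt (x ^ 3) \<le> (1 / x)\<^sup>2"
      using assms by (simp add: divide_left_mono power_one_over)
    also have "\<dots> \<le> (1 + 1 / x)\<^sup>2" using assms by (intro power_mono) auto
    finally show ?thesis .
  qed
  finally show ?thesis .
qed

(* For t \<ge> a the factor exp(-\<delta>\<^sup>2t\<^sup>2/(2x)) \<le> exp(-\<delta>\<^sup>2a\<^sup>2/(2x)) absorbs any power of 1/x near x = 0. *)
lemma ig_density_weighted_bound:
  assumes "0 < \<delta>" "0 \<le> \<gamma>" "0 < a"
  shows "\<exists>K. \<forall>t x. a \<le> t \<longrightarrow> t \<le> b \<longrightarrow> 0 < x \<longrightarrow>
           ig_density \<delta> \<gamma> x t * (1 + 1 / x)\<^sup>2 \<le> K * exp (- (\<gamma>\<^sup>2 / 2) * x)"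
proof (intro exI allI impI)
  define c where "c = \<delta>\<^sup>2 * a\<^sup>2 / 2"
  define E where "E = (\<lambda>x. exp (\<delta> * \<gamma> * b) * exp (- c * (1 / x)) * exp (- (\<gamma>\<^sup>2 / 2) * x))"
  fix t x :: real
  assume t: "a \<le> t" "t \<le> b" and x: "0 < x"
  have "0 < c" using assms by (simp add: c_def)
  have "\<delta>\<^sup>2 * a\<^sup>2 \<le> \<delta>\<^sup>2 * t\<^sup>2"
    using assms t by (intro mult_left_mono power_mono) auto
  then have "c * (1 / x) \<le> \<delta>\<^sup>2 * t\<^sup>2 / 2 / x"
    unfolding c_def using x by (simp add: divide_right_mono)
  moreover have "\<delta> * \<gamma> * t \<le> \<delta> * \<gamma> * b" using assms t by (intro mult_left_mono) auto
  moreover have "(\<delta>\<^sup>2 * t\<^sup>2 / x + \<gamma>\<^sup>2 * x) / 2 = \<delta>\<^sup>2 * t\<^sup>2 / 2 / x + \<gamma>\<^sup>2 / 2 * x"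
    by (simp add: field_simps)
  ultimately have "\<delta> * \<gamma> * t - (\<delta>\<^sup>2 * t\<^sup>2 / x + \<gamma>\<^sup>2 * x) / 2
      \<le> \<delta> * \<gamma> * b + - c * (1 / x) + - (\<gamma>\<^sup>2 / 2) * x"
    by linarith
  then have "exp (\<delta> * \<gamma> * t - (\<delta>\<^sup>2 * t\<^sup>2 / x + \<gamma>\<^sup>2 * x) / 2) \<le> E x"
    unfolding E_def by (simp only: exp_le_cancel_iff flip: exp_add)
  moreover have "ig_density \<delta> \<gamma> x t
      = \<delta> * t * (1 / sqrt (2 * pi * x ^ 3)) * exp (\<delta> * \<gamma> * t - (\<delta>\<^sup>2 * t\<^sup>2 / x + \<gamma>\<^sup>2 * x) / 2)"
    unfolding ig_density_def by simp
  ultimately have "ig_density \<delta> \<gamma> x t \<le> \<delta> * b * (1 + 1 / x)\<^sup>2 * E x"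
    using inverse_sqrt_cube_le[OF x] assms t x by (simp only:) (intro mult_mono; simp)
  then have "ig_density \<delta> \<gamma> x t * (1 + 1 / x)\<^sup>2 \<le> \<delta> * b * (1 + 1 / x)\<^sup>2 * E x * (1 + 1 / x)\<^sup>2"
    by (rule mult_right_mono) simp
  also have "\<dots> = \<delta> * b * exp (\<delta> * \<gamma> * b) * ((1 + 1 / x) ^ 4 * exp (- c * (1 / x))) * exp (- (\<gamma>\<^sup>2 / 2) * x)"
  proof -
    have "(1 + 1 / x) ^ 4 = (1 + 1 / x)\<^sup>2 * (1 + 1 / x)\<^sup>2" by (simp flip: power_add)
    then show ?thesis unfolding E_def by (simp only: mult_ac)
  qed
  also have "\<dots> \<le> \<delta> * b * exp (\<delta> * \<gamma> * b) * (1 / min 1 (c / 4) ^ 4) * exp (- (\<gamma>\<^sup>2 / 2) * x)"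
    using assms t x \<open>0 < c\<close> one_plus_pow4_exp_le[of c "1 / x"]
    by (intro mult_right_mono mult_left_mono) auto
  finally show "ig_density \<delta> \<gamma> x t * (1 + 1 / x)\<^sup>2
      \<le> \<delta> * b * exp (\<delta> * \<gamma> * b) * (1 / min 1 (c / 4) ^ 4) * exp (- (\<gamma>\<^sup>2 / 2) * x)" .
qed

lemma continuous_on_Icc_abs_bounded:
  fixes f :: "real \<Rightarrow> real"
  assumes "continuous_on {a..b} f"
  shows "\<exists>B. \<forall>t\<in>{a..b}. \<bar>f t\<bar> \<le> B"
  using compact_imp_bounded[OF compact_continuous_image[OF assms compact_Icc]]
  by (auto simp: bounded_iff)

lemma abs_quadratic_in_inverse_le:
  fixes x :: real
  assumes "0 < x"
  shows "\<bar>A + B / x + C / x\<^sup>2\<bar> \<le> (\<bar>A\<bar> + \<bar>B\<bar> + \<bar>C\<bar>) * (1 + 1 / x)\<^sup>2"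
proof -
  define u where "u = 1 / x"
  have u: "0 \<le> u" using assms by (simp add: u_def)
  have "\<bar>B / x\<bar> = \<bar>B\<bar> * u" "\<bar>C / x\<^sup>2\<bar> = \<bar>C\<bar> * u\<^sup>2"
    using assms by (simp_all add: u_def abs_divide power_one_over)
  then have "\<bar>A + B / x + C / x\<^sup>2\<bar> \<le> \<bar>A\<bar> + \<bar>B\<bar> * u + \<bar>C\<bar> * u\<^sup>2"
    using abs_triangle_ineq[of "A + B / x" "C / x\<^sup>2"] abs_triangle_ineq[of A "B / x"] by linarith
  also have "\<dots> \<le> \<bar>A\<bar> * (1 + u)\<^sup>2 + \<bar>B\<bar> * (1 + u)\<^sup>2 + \<bar>C\<bar> * (1 + u)\<^sup>2"
    using u by (intro add_mono mult_left_mono) (auto simp: power2_eq_square algebra_simps)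
  finally show ?thesis by (simp add: u_def algebra_simps)
qed

definition locally_exp_dominated :: "real \<Rightarrow> (real \<Rightarrow> real \<Rightarrow> real) \<Rightarrow> bool" where
  "locally_exp_dominated c G \<longleftrightarrow>
     (\<forall>a b. 0 < a \<longrightarrow> (\<exists>K. \<forall>t x. a \<le> t \<longrightarrow> t \<le> b \<longrightarrow> 0 < x \<longrightarrow> \<bar>G x t\<bar> \<le> K * exp (- c * x)))"

(* g and the derivatives ig_dt, ig_dtt, ig_dx are all of the form g times a polynomial of degree
   at most 2 in 1/x whose coefficients are continuous in t. *)
lemma locally_exp_dominated_ig_density_mult:
  assumes "0 < \<delta>" "0 \<le> \<gamma>"
    and cont: "continuous_on {0<..} A" "continuous_on {0<..} B" "continuous_on {0<..} C"
    and F: "\<And>x t. 0 < x \<Longrightarrow> 0 < t \<Longrightarrow> F x t = A t + B t / x + C t / x\<^sup>2"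
  shows "locally_exp_dominated (\<gamma>\<^sup>2 / 2) (\<lambda>x t. ig_density \<delta> \<gamma> x t * F x t)"
  unfolding locally_exp_dominated_def
proof (intro allI impI)
  fix a b :: real assume "0 < a"
  then have "{a..b} \<subseteq> {0<..}" by auto
  then obtain B0 B1 B2 where B: "\<And>t. t \<in> {a..b} \<Longrightarrow> \<bar>A t\<bar> \<le> B0 \<and> \<bar>B t\<bar> \<le> B1 \<and> \<bar>C t\<bar> \<le> B2"
    using cont[THEN continuous_on_subset, THEN continuous_on_Icc_abs_bounded] by metis
  obtain K where K: "\<And>t x. a \<le> t \<Longrightarrow> t \<le> b \<Longrightarrow> 0 < x \<Longrightarrow>
      ig_density \<delta> \<gamma> x t * (1 + 1 / x)\<^sup>2 \<le> K * exp (- (\<gamma>\<^sup>2 / 2) * x)"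
    using ig_density_weighted_bound[OF assms(1,2) \<open>0 < a\<close>] by blast
  show "\<exists>K'. \<forall>t x. a \<le> t \<longrightarrow> t \<le> b \<longrightarrow> 0 < x \<longrightarrow>
      \<bar>ig_density \<delta> \<gamma> x t * F x t\<bar> \<le> K' * exp (- (\<gamma>\<^sup>2 / 2) * x)"
  proof (intro exI allI impI)
    fix t x :: real assume t: "a \<le> t" "t \<le> b" and x: "0 < x"
    have g: "0 \<le> ig_density \<delta> \<gamma> x t" using assms t x \<open>0 < a\<close> by (intro ig_density_nonneg) auto
    have "\<bar>F x t\<bar> = \<bar>A t + B t / x + C t / x\<^sup>2\<bar>" using F x t \<open>0 < a\<close> by simp
    also have "\<dots> \<le> (\<bar>A t\<bar> + \<bar>B t\<bar> + \<bar>C t\<bar>) * (1 + 1 / x)\<^sup>2"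
      by (rule abs_quadratic_in_inverse_le[OF x])
    also have "\<dots> \<le> (B0 + B1 + B2) * (1 + 1 / x)\<^sup>2"
      using B[of t] t by (intro mult_right_mono) auto
    finally have "\<bar>F x t\<bar> \<le> (B0 + B1 + B2) * (1 + 1 / x)\<^sup>2" .
    then have "\<bar>ig_density \<delta> \<gamma> x t * F x t\<bar> \<le> (B0 + B1 + B2) * (ig_density \<delta> \<gamma> x t * (1 + 1 / x)\<^sup>2)"
      using g by (simp add: abs_mult mult_left_mono mult.left_commute)
    also have "\<dots> \<le> (B0 + B1 + B2) * (K * exp (- (\<gamma>\<^sup>2 / 2) * x))"
      using K[OF t x] B[of t] t by (intro mult_left_mono) force+
    finally show "\<bar>ig_density \<delta> \<gamma> x t * F x t\<bar> \<le> ((B0 + B1 + B2) * K) * exp (- (\<gamma>\<^sup>2 / 2) * x)"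
      by (simp add: mult.assoc)
  qed
qed

lemma locally_exp_dominated_ig_density:
  "0 < \<delta> \<Longrightarrow> 0 \<le> \<gamma> \<Longrightarrow> locally_exp_dominated (\<gamma>\<^sup>2 / 2) (ig_density \<delta> \<gamma>)"
  using locally_exp_dominated_ig_density_mult[of \<delta> \<gamma> "\<lambda>_. 1" "\<lambda>_. 0" "\<lambda>_. 0" "\<lambda>_ _. 1"] by simp

lemma locally_exp_dominated_ig_dt:
  assumes "0 < \<delta>" "0 \<le> \<gamma>"
  shows "locally_exp_dominated (\<gamma>\<^sup>2 / 2) (ig_dt \<delta> \<gamma>)"
proof -
  have "locally_exp_dominated (\<gamma>\<^sup>2 / 2) (\<lambda>x t. ig_density \<delta> \<gamma> x t * (1/t + \<delta>*\<gamma> - \<delta>\<^sup>2*t/x))"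
    by (rule locally_exp_dominated_ig_density_mult[OF assms,
          where A = "\<lambda>t. 1/t + \<delta>*\<gamma>" and B = "\<lambda>t. - \<delta>\<^sup>2*t" and C = "\<lambda>_. 0"])
       (auto intro!: continuous_intros)
  then show ?thesis unfolding ig_dt_def[abs_def] .
qed

lemma locally_exp_dominated_ig_dtt:
  assumes "0 < \<delta>" "0 \<le> \<gamma>"
  shows "locally_exp_dominated (\<gamma>\<^sup>2 / 2) (ig_dtt \<delta> \<gamma>)"
proof -
  have "locally_exp_dominated (\<gamma>\<^sup>2 / 2)
      (\<lambda>x t. ig_density \<delta> \<gamma> x t * ((1/t + \<delta>*\<gamma> - \<delta>\<^sup>2*t/x)\<^sup>2 - 1/t\<^sup>2 - \<delta>\<^sup>2/x))"
    by (rule locally_exp_dominated_ig_density_mult[OF assms,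
          where A = "\<lambda>t. 2*\<delta>*\<gamma>/t + (\<delta>*\<gamma>)\<^sup>2" and B = "\<lambda>t. - 3*\<delta>\<^sup>2 - 2*\<delta>^3*\<gamma>*t"
          and C = "\<lambda>t. (\<delta>\<^sup>2*t)\<^sup>2"])
       (auto intro!: continuous_intros simp: field_simps power2_eq_square power3_eq_cube)
  then show ?thesis unfolding ig_dtt_def[abs_def] .
qed

lemma locally_exp_dominated_ig_dx:
  assumes "0 < \<delta>" "0 \<le> \<gamma>"
  shows "locally_exp_dominated (\<gamma>\<^sup>2 / 2) (ig_dx \<delta> \<gamma>)"
proof -
  have "locally_exp_dominated (\<gamma>\<^sup>2 / 2)
      (\<lambda>x t. ig_density \<delta> \<gamma> x t * (-3/(2*x) + \<delta>\<^sup>2*t\<^sup>2/(2*x\<^sup>2) - \<gamma>\<^sup>2/2))"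
    by (rule locally_exp_dominated_ig_density_mult[OF assms,
          where A = "\<lambda>_. - \<gamma>\<^sup>2/2" and B = "\<lambda>_. -3/2" and C = "\<lambda>t. \<delta>\<^sup>2*t\<^sup>2/2"])
       (auto intro!: continuous_intros simp: field_simps)
  then show ?thesis unfolding ig_dx_def[abs_def] .
qed

section \<open>Integrals against the kernel\<close>

lemma set_integrable_exp_neg:
  fixes c :: real
  assumes "0 < c"
  shows "set_integrable lborel {0<..} (\<lambda>x. exp (- c * x))"
proof -
  have "(\<lambda>x. exp (- c * x)) absolutely_integrable_on {0..}"
    using integrable_on_exp_minus_to_infinity[OF assms, of 0]
    by (intro nonnegative_absolutely_integrable_1) simp_all
  then have "set_integrable lborel {0..} (\<lambda>x. exp (- c * x))"
    unfolding set_integrable_def by (subst (asm) integrable_completion) measurable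
  then show ?thesis by (rule set_integrable_subset) auto
qed

lemma set_integrable_bounded_mult_dominated:
  fixes \<phi> :: "real \<Rightarrow> real" and G :: "real \<Rightarrow> real \<Rightarrow> real"
  assumes "0 < c" and \<phi>: "\<phi> \<in> borel_measurable lborel" "\<And>x. 0 < x \<Longrightarrow> \<bar>\<phi> x\<bar> \<le> B"
    and G: "(\<lambda>x. G x t) \<in> borel_measurable lborel" "locally_exp_dominated c G" and "0 < t"
  shows "set_integrable lborel {0<..} (\<lambda>x. \<phi> x * G x t)"
proof -
  obtain K where K: "\<And>x. 0 < x \<Longrightarrow> \<bar>G x t\<bar> \<le> K * exp (- c * x)"
    using G(2) \<open>0 < t\<close> unfolding locally_exp_dominated_def by blast
  have "0 \<le> B" using \<phi>(2)[of 1] by simp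
  show ?thesis
  proof (rule set_integrable_bound)
    show "set_integrable lborel {0<..} (\<lambda>x. B * K * exp (- c * x))"
      using set_integrable_exp_neg[OF \<open>0 < c\<close>] by (rule set_integrable_mult_right)
    show "set_borel_measurable lborel {0<..} (\<lambda>x. \<phi> x * G x t)"
      unfolding set_borel_measurable_def using \<phi>(1) G(1) by measurable
    have "\<bar>\<phi> x * G x t\<bar> \<le> B * (K * exp (- c * x))" if "0 < x" for x
      unfolding abs_mult using \<phi>(2) K \<open>0 \<le> B\<close> that by (intro mult_mono) auto
    then show "AE x in lborel. x \<in> {0<..} \<longrightarrow> norm (\<phi> x * G x t) \<le> norm (B * K * exp (- c * x))"
      by (intro AE_I2) (auto simp: mult.assoc intro: order_trans[OF _ abs_ge_self])
  qed
qed

(* By the mean value theorem the difference quotients are dominated by D, so dominated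
   convergence applies along every sequence tending to t0. *)
lemma has_real_derivative_integral:
  fixes h h' :: "'a \<Rightarrow> real \<Rightarrow> real" and D :: "'a \<Rightarrow> real"
  assumes t0: "a < t0" "t0 < b"
    and der: "\<And>x t. x \<in> space M \<Longrightarrow> a < t \<Longrightarrow> t < b \<Longrightarrow> (h x has_real_derivative h' x t) (at t)"
    and int: "\<And>t. a < t \<Longrightarrow> t < b \<Longrightarrow> integrable M (\<lambda>x. h x t)"
    and meas: "(\<lambda>x. h' x t0) \<in> borel_measurable M"
    and D: "integrable M D" "\<And>x t. x \<in> space M \<Longrightarrow> a < t \<Longrightarrow> t < b \<Longrightarrow> \<bar>h' x t\<bar> \<le> D x"
  shows "((\<lambda>t. \<integral>x. h x t \<partial>M) has_real_derivative (\<integral>x. h' x t0 \<partial>M)) (at t0)"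
proof -
  let ?q = "\<lambda>y x. (h x y - h x t0) / (y - t0)"
  have quotient_bound: "\<bar>?q y x\<bar> \<le> D x" if x: "x \<in> space M" and y: "y \<in> {a<..<b} - {t0}" for x y
  proof -
    have "\<bar>h x y - h x t0\<bar> \<le> D x * \<bar>y - t0\<bar>"
      using field_differentiable_bound[of "{a<..<b}" "h x" "h' x" "D x" y t0] der[OF x] D(2)[OF x] y t0
      by (auto simp: has_field_derivative_at_within)
    then show ?thesis using y by (simp add: abs_divide divide_le_eq)
  qed
  have "((\<lambda>y. \<integral>x. ?q y x \<partial>M) \<longlongrightarrow> (\<integral>x. h' x t0 \<partial>M)) (at t0 within {a<..<b})"
    unfolding tendsto_at_iff_sequentially comp_def
  proof (intro allI impI)
    fix X :: "nat \<Rightarrow> real" assume X: "\<forall>i. X i \<in> {a<..<b} - {t0}" "X \<longlonglongrightarrow> t0"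
    show "(\<lambda>i. \<integral>x. ?q (X i) x \<partial>M) \<longlonglongrightarrow> (\<integral>x. h' x t0 \<partial>M)"
    proof (rule integral_dominated_convergence[where w = D])
      show "?q (X i) \<in> borel_measurable M" for i
        using int[of "X i"] int[OF t0] X(1) by (auto dest!: borel_measurable_integrable)
      show "AE x in M. (\<lambda>i. ?q (X i) x) \<longlonglongrightarrow> h' x t0"
      proof (rule AE_I2)
        fix x assume "x \<in> space M"
        then have "((\<lambda>y. ?q y x) \<longlongrightarrow> h' x t0) (at t0)"
          using der t0 by (simp add: has_field_derivative_iff)
        then show "(\<lambda>i. ?q (X i) x) \<longlonglongrightarrow> h' x t0"
          using X by (auto simp: tendsto_at_iff_sequentially comp_def)
      qed
      show "AE x in M. norm (?q (X i) x) \<le> D x" for i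
        using quotient_bound X(1) by (auto intro!: AE_I2)
    qed (use meas D in auto)
  qed
  moreover have "\<forall>\<^sub>F y in at t0 within {a<..<b}.
      (\<integral>x. ?q y x \<partial>M) = ((\<integral>x. h x y \<partial>M) - (\<integral>x. h x t0 \<partial>M)) / (y - t0)"
    unfolding eventually_at_filter using int t0 by (auto intro!: always_eventually)
  ultimately have "((\<lambda>y. ((\<integral>x. h x y \<partial>M) - (\<integral>x. h x t0 \<partial>M)) / (y - t0))
      \<longlongrightarrow> (\<integral>x. h' x t0 \<partial>M)) (at t0 within {a<..<b})"
    by (rule Lim_transform_eventually)
  then show ?thesis
    using at_within_open[of t0 "{a<..<b}"] t0 by (simp add: has_field_derivative_iff)
qed

lemma has_real_derivative_set_integral_dominated:
  fixes \<phi> :: "real \<Rightarrow> real" and G G' :: "real \<Rightarrow> real \<Rightarrow> real"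
  assumes "0 < c" and \<phi>: "\<phi> \<in> borel_measurable lborel" "\<And>x. 0 < x \<Longrightarrow> \<bar>\<phi> x\<bar> \<le> B"
    and G: "\<And>t. (\<lambda>x. G x t) \<in> borel_measurable lborel" "locally_exp_dominated c G"
    and G': "\<And>t. (\<lambda>x. G' x t) \<in> borel_measurable lborel" "locally_exp_dominated c G'"
    and der: "\<And>x t. 0 < x \<Longrightarrow> 0 < t \<Longrightarrow> ((\<lambda>t. G x t) has_real_derivative G' x t) (at t)"
    and "0 < t0"
  shows "((\<lambda>t. LINT x:{0<..}|lborel. \<phi> x * G x t) has_real_derivative
           (LINT x:{0<..}|lborel. \<phi> x * G' x t0)) (at t0)"
proof -
  obtain K where K: "\<And>t x. t0 / 2 \<le> t \<Longrightarrow> t \<le> 2 * t0 \<Longrightarrow> 0 < x \<Longrightarrow> \<bar>G' x t\<bar> \<le> K * exp (- c * x)"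
    using G'(2) \<open>0 < t0\<close> unfolding locally_exp_dominated_def by (meson half_gt_zero)
  have "0 \<le> B" using \<phi>(2)[of 1] by simp
  let ?D = "\<lambda>x. indicator {0<..} x * (B * K * exp (- c * x))"
  show ?thesis
    unfolding set_lebesgue_integral_def real_scaleR_def
  proof (rule has_real_derivative_integral[where a = "t0 / 2" and b = "2 * t0" and D = ?D])
    show "t0 / 2 < t0" "t0 < 2 * t0" using \<open>0 < t0\<close> by auto
    show "((\<lambda>t. indicator {0<..} x * (\<phi> x * G x t)) has_real_derivative
        indicator {0<..} x * (\<phi> x * G' x t)) (at t)" if "t0 / 2 < t" "t < 2 * t0" for x t
      using der[of x t] that \<open>0 < t0\<close> by (cases "0 < x") (auto intro!: DERIV_cmult)
    show "integrable lborel (\<lambda>x. indicator {0<..} x * (\<phi> x * G x t))" if "t0 / 2 < t" for t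
      using set_integrable_bounded_mult_dominated[OF \<open>0 < c\<close> \<phi> G(1) G(2), of t] that \<open>0 < t0\<close>
      by (simp add: set_integrable_def)
    show "(\<lambda>x. indicator {0<..} x * (\<phi> x * G' x t0)) \<in> borel_measurable lborel"
      using \<phi>(1) G'(1) by measurable
    show "integrable lborel ?D"
      using set_integrable_mult_right[OF set_integrable_exp_neg[OF \<open>0 < c\<close>], of "B * K"]
      by (simp add: set_integrable_def mult.assoc)
    show "\<bar>indicator {0<..} x * (\<phi> x * G' x t)\<bar> \<le> ?D x" if "t0 / 2 < t" "t < 2 * t0" for x t
      using \<phi>(2)[of x] K[of t x] that \<open>0 \<le> B\<close>
      by (auto simp: indicator_def abs_mult mult.assoc intro!: mult_mono)
  qed
qed

lemma tendsto_zero_bounded_mult: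
  fixes f g :: "'a \<Rightarrow> real"
  assumes "\<forall>\<^sub>F x in F. \<bar>f x\<bar> \<le> B" and "(g \<longlongrightarrow> 0) F"
  shows "((\<lambda>x. f x * g x) \<longlongrightarrow> 0) F"
proof (rule Lim_null_comparison)
  show "\<forall>\<^sub>F x in F. norm (f x * g x) \<le> B * \<bar>g x\<bar>"
    using assms(1) by eventually_elim (auto simp: abs_mult intro: mult_right_mono)
  show "((\<lambda>x. B * \<bar>g x\<bar>) \<longlongrightarrow> 0) F"
    using tendsto_mult_right_zero[OF tendsto_rabs_zero[OF assms(2)]] .
qed

(* Integration by parts in x; the boundary terms vanish because g(x,t) \<rightarrow> 0 at 0+ and at \<infinity>. *)
lemma set_integral_mult_ig_dx:
  fixes \<phi> \<phi>' :: "real \<Rightarrow> real"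
  assumes "0 < \<delta>" "0 < \<gamma>" "0 < t"
    and \<phi>: "\<phi> \<in> borel_measurable lborel" "\<And>x. 0 < x \<Longrightarrow> \<bar>\<phi> x\<bar> \<le> B"
    and der: "\<And>x. 0 < x \<Longrightarrow> (\<phi> has_real_derivative \<phi>' x) (at x)"
    and cont: "\<And>x. 0 < x \<Longrightarrow> isCont \<phi>' x"
    and int: "set_integrable lborel {0<..} (\<lambda>x. \<phi>' x * ig_density \<delta> \<gamma> x t)"
  shows "(LINT x:{0<..}|lborel. \<phi> x * ig_dx \<delta> \<gamma> x t)
       = - (LINT x:{0<..}|lborel. \<phi>' x * ig_density \<delta> \<gamma> x t)"
proof -
  let ?F = "\<lambda>x. \<phi> x * ig_density \<delta> \<gamma> x t"
  let ?f = "\<lambda>x. \<phi>' x * ig_density \<delta> \<gamma> x t + \<phi> x * ig_dx \<delta> \<gamma> x t"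
  have int_dx: "set_integrable lborel {0<..} (\<lambda>x. \<phi> x * ig_dx \<delta> \<gamma> x t)"
    by (rule set_integrable_bounded_mult_dominated[where c = "\<gamma>\<^sup>2 / 2", OF _ \<phi>
          borel_measurable_ig_dx locally_exp_dominated_ig_dx]) (use assms in auto)
  have "einterval 0 \<infinity> = {0::real<..}" by (simp add: zero_ereal_def)
  moreover have "(LBINT x=0..\<infinity>. ?f x) = 0 - 0"
  proof (rule interval_integral_FTC_integrable)
    fix x :: real assume "0 < ereal x"
    then have x: "0 < x" by (simp add: zero_ereal_def)
    show "(?F has_vector_derivative ?f x) (at x)"
      using DERIV_mult[OF der[OF x] ig_density_has_derivative_x[OF x]]
      by (simp add: has_real_derivative_iff_has_vector_derivative[symmetric] mult.commute)
    show "isCont ?f x"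
      using x by (intro continuous_intros cont DERIV_isCont[OF der] isCont_ig_density_x isCont_ig_dx)
  next
    show "((?F \<circ> real_of_ereal) \<longlongrightarrow> 0) (at_right 0)"
      using tendsto_zero_bounded_mult[OF eventually_mono[OF eventually_at_right_less \<phi>(2)]
          ig_density_tendsto_0_at_right[OF \<open>0 < \<delta>\<close> \<open>0 < t\<close>]]
      by (simp add: zero_ereal_def ereal_tendsto_simps)
    show "((?F \<circ> real_of_ereal) \<longlongrightarrow> 0) (at_left \<infinity>)"
      using tendsto_zero_bounded_mult[OF eventually_mono[OF eventually_gt_at_top \<phi>(2)]
          ig_density_tendsto_0_at_top[OF \<open>0 < \<gamma>\<close>]]
      by (simp add: ereal_tendsto_simps)
  qed (use set_integral_add(1)[OF int int_dx] \<open>einterval 0 \<infinity> = {0<..}\<close> in auto)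
  ultimately have "(LINT x:{0<..}|lborel. ?f x) = 0"
    by (simp add: interval_lebesgue_integral_def)
  then show ?thesis
    using set_integral_add(2)[OF int int_dx] by simp
qed

lemma set_integral_sum:
  fixes f :: "'i \<Rightarrow> 'a \<Rightarrow> real"
  assumes "\<And>i. i \<in> I \<Longrightarrow> set_integrable M A (f i)"
  shows "set_integrable M A (\<lambda>x. \<Sum>i\<in>I. f i x)"
    and "(LINT x:A|M. \<Sum>i\<in>I. f i x) = (\<Sum>i\<in>I. LINT x:A|M. f i x)"
  using assms unfolding set_integrable_def set_lebesgue_integral_def
  by (simp_all add: sum_distrib_left integral_sum)

section \<open>The equation for the time-changed process\<close>

lemma set_integrable_mgcp_pmf_mult_dominated:
  assumes "\<forall>i<q. \<forall>j\<in>{1..k i}. 0 \<le> lam i j" and "0 < c"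
    and "\<And>t. (\<lambda>x. G x t) \<in> borel_measurable lborel" "locally_exp_dominated c G" "0 < t"
  shows "set_integrable lborel {0<..} (\<lambda>x. mgcp_pmf q k lam n x * G x t)"
proof -
  obtain B where "\<forall>x\<ge>0. \<bar>mgcp_pmf q k lam n x\<bar> \<le> B"
    using mgcp_pmf_bounded[OF assms(1)] by blast
  then show ?thesis
    using assms(2-) by (intro set_integrable_bounded_mult_dominated[where B = B]) auto
qed

lemma set_integral_mgcp_pmf_inflow:
  fixes g :: "real \<Rightarrow> real" and n :: "nat \<Rightarrow> nat"
  assumes int: "\<And>m. set_integrable lborel A (\<lambda>x. mgcp_pmf q k lam m x * g x)"
  defines "jump \<equiv> \<lambda>i j x. lam i j * (if j \<le> n i then mgcp_pmf q k lam (n(i := n i - j)) x * g x else 0)"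
  shows "set_integrable lborel A (\<lambda>x. \<Sum>i<q. \<Sum>j=1..k i. jump i j x)"
    and "(LINT x:A|lborel. \<Sum>i<q. \<Sum>j=1..k i. jump i j x)
       = (\<Sum>i<q. \<Sum>j=1..k i. lam i j *
            (if j \<le> n i then LINT x:A|lborel. mgcp_pmf q k lam (n(i := n i - j)) x * g x else 0))"
proof -
  have jump_cases: "set_integrable lborel A (jump i j) \<and> (LINT x:A|lborel. jump i j x)
      = lam i j * (if j \<le> n i then LINT x:A|lborel. mgcp_pmf q k lam (n(i := n i - j)) x * g x else 0)"
    for i j
  proof (cases "j \<le> n i")
    case True
    then show ?thesis using int[of "n(i := n i - j)"] by (simp add: jump_def)
  next
    case False
    then show ?thesis by (simp add: jump_def set_integrable_def)
  qed
  then have int_jump: "set_integrable lborel A (jump i j)"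
    and integral_jump: "(LINT x:A|lborel. jump i j x)
      = lam i j * (if j \<le> n i then LINT x:A|lborel. mgcp_pmf q k lam (n(i := n i - j)) x * g x else 0)"
    for i j
    by simp_all
  have int_row: "set_integrable lborel A (\<lambda>x. \<Sum>j=1..k i. jump i j x)" for i
    using int_jump by (rule set_integral_sum(1))
  show "set_integrable lborel A (\<lambda>x. \<Sum>i<q. \<Sum>j=1..k i. jump i j x)"
    using int_row by (rule set_integral_sum(1))
  show "(LINT x:A|lborel. \<Sum>i<q. \<Sum>j=1..k i. jump i j x)
      = (\<Sum>i<q. \<Sum>j=1..k i. lam i j *
            (if j \<le> n i then LINT x:A|lborel. mgcp_pmf q k lam (n(i := n i - j)) x * g x else 0))"
    unfolding set_integral_sum(2)[OF int_row] set_integral_sum(2)[OF int_jump] integral_jump ..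
qed

lemma set_integral_mgcp_pmf_deriv_ig_density:
  assumes "\<forall>i<q. \<forall>j\<in>{1..k i}. 0 \<le> lam i j" and "0 < \<delta>" "0 < \<gamma>" "0 < t"
  shows "set_integrable lborel {0<..} (\<lambda>x. mgcp_pmf_deriv q k lam n x * ig_density \<delta> \<gamma> x t)"
    and "(LINT x:{0<..}|lborel. mgcp_pmf_deriv q k lam n x * ig_density \<delta> \<gamma> x t)
       = (\<Sum>i<q. \<Sum>j=1..k i. lam i j * tc_pmf_shift q k lam \<delta> \<gamma> n i j t)
         - (\<Sum>i<q. \<Sum>j=1..k i. lam i j) * tc_pmf q k lam \<delta> \<gamma> n t"
proof -
  let ?g = "\<lambda>x. ig_density \<delta> \<gamma> x t"
  let ?L = "\<Sum>i<q. \<Sum>j=1..k i. lam i j"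
  let ?inflow = "\<lambda>x. \<Sum>i<q. \<Sum>j=1..k i.
      lam i j * (if j \<le> n i then mgcp_pmf q k lam (n(i := n i - j)) x * ?g x else 0)"
  have int: "set_integrable lborel {0<..} (\<lambda>x. mgcp_pmf q k lam m x * ?g x)" for m
    using assms
    by (intro set_integrable_mgcp_pmf_mult_dominated[where c = "\<gamma>\<^sup>2 / 2"] locally_exp_dominated_ig_density) auto
  have int_outflow: "set_integrable lborel {0<..} (\<lambda>x. ?L * (mgcp_pmf q k lam n x * ?g x))"
    using int by auto
  note inflow = set_integral_mgcp_pmf_inflow[OF int, where n = n]
  have expand: "mgcp_pmf_deriv q k lam n x * ?g x = ?inflow x - ?L * (mgcp_pmf q k lam n x * ?g x)" for x
  proof -
    have "\<And>c a g :: real. (if c then a else 0) * g = (if c then a * g else 0)" by simp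
    then show ?thesis
      unfolding mgcp_pmf_deriv_def by (simp add: left_diff_distrib sum_distrib_right mult.assoc)
  qed
  show "set_integrable lborel {0<..} (\<lambda>x. mgcp_pmf_deriv q k lam n x * ?g x)"
    unfolding expand using inflow(1) int_outflow by (rule set_integral_diff(1))
  show "(LINT x:{0<..}|lborel. mgcp_pmf_deriv q k lam n x * ?g x)
      = (\<Sum>i<q. \<Sum>j=1..k i. lam i j * tc_pmf_shift q k lam \<delta> \<gamma> n i j t) - ?L * tc_pmf q k lam \<delta> \<gamma> n t"
    unfolding expand set_integral_diff(2)[OF inflow(1) int_outflow] inflow(2) set_integral_mult_right
      tc_pmf_shift_def tc_pmf_def ..
qed

lemma has_real_derivative_set_integral_mgcp_pmf:
  assumes "\<forall>i<q. \<forall>j\<in>{1..k i}. 0 \<le> lam i j" and "0 < c"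
    and "\<And>t. (\<lambda>x. G x t) \<in> borel_measurable lborel" "locally_exp_dominated c G"
    and "\<And>t. (\<lambda>x. G' x t) \<in> borel_measurable lborel" "locally_exp_dominated c G'"
    and "\<And>x t. 0 < x \<Longrightarrow> 0 < t \<Longrightarrow> ((\<lambda>t. G x t) has_real_derivative G' x t) (at t)"
    and "0 < t0"
  shows "((\<lambda>t. LINT x:{0<..}|lborel. mgcp_pmf q k lam n x * G x t) has_real_derivative
           (LINT x:{0<..}|lborel. mgcp_pmf q k lam n x * G' x t0)) (at t0)"
proof -
  obtain B where "\<forall>x\<ge>0. \<bar>mgcp_pmf q k lam n x\<bar> \<le> B"
    using mgcp_pmf_bounded[OF assms(1)] by blast
  then show ?thesis
    using assms(2-) by (intro has_real_derivative_set_integral_dominated[where B = B]) auto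
qed

lemma tc_pmf_kernel_identity:
  assumes lam: "\<forall>i<q. \<forall>j\<in>{1..k i}. 0 \<le> lam i j" and "0 < \<delta>" "0 < \<gamma>" "0 < t"
  shows "(LINT x:{0<..}|lborel. mgcp_pmf q k lam n x * ig_dtt \<delta> \<gamma> x t)
         - 2 * \<delta> * \<gamma> * (LINT x:{0<..}|lborel. mgcp_pmf q k lam n x * ig_dt \<delta> \<gamma> x t)
       = 2 * \<delta>\<^sup>2 * (\<Sum>i<q. \<Sum>j=1..k i. lam i j) * tc_pmf q k lam \<delta> \<gamma> n t
         - 2 * \<delta>\<^sup>2 * (\<Sum>i<q. \<Sum>j=1..k i. lam i j * tc_pmf_shift q k lam \<delta> \<gamma> n i j t)"
proof -
  let ?p = "mgcp_pmf q k lam n"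
  have int: "set_integrable lborel {0<..} (\<lambda>x. ?p x * G x t)"
    if "\<And>t. (\<lambda>x. G x t) \<in> borel_measurable lborel" "locally_exp_dominated (\<gamma>\<^sup>2 / 2) G" for G
    using assms that by (intro set_integrable_mgcp_pmf_mult_dominated) auto
  obtain B where B: "\<forall>x\<ge>0. \<bar>?p x\<bar> \<le> B"
    using mgcp_pmf_bounded[OF lam] by blast
  note forward_integral = set_integral_mgcp_pmf_deriv_ig_density(2)[OF lam assms(2-4), of n]
  have "(LINT x:{0<..}|lborel. ?p x * ig_dtt \<delta> \<gamma> x t) - 2 * \<delta> * \<gamma> * (LINT x:{0<..}|lborel. ?p x * ig_dt \<delta> \<gamma> x t)
      = (LINT x:{0<..}|lborel. ?p x * ig_dtt \<delta> \<gamma> x t - 2 * \<delta> * \<gamma> * (?p x * ig_dt \<delta> \<gamma> x t))"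
    using assms
    by (simp add: int locally_exp_dominated_ig_dt locally_exp_dominated_ig_dtt set_integral_diff(2))
  also have "\<dots> = (LINT x:{0<..}|lborel. 2 * \<delta>\<^sup>2 * (?p x * ig_dx \<delta> \<gamma> x t))"
    using ig_density_pde[OF _ \<open>0 < t\<close>]
    by (intro set_lebesgue_integral_cong) (auto simp: algebra_simps)
  also have "\<dots> = - 2 * \<delta>\<^sup>2 * (LINT x:{0<..}|lborel. mgcp_pmf_deriv q k lam n x * ig_density \<delta> \<gamma> x t)"
    using set_integral_mult_ig_dx[where \<phi> = ?p and \<phi>' = "mgcp_pmf_deriv q k lam n" and B = B]
      set_integral_mgcp_pmf_deriv_ig_density(1) B assms
    by (simp add: mgcp_pmf_has_derivative isCont_mgcp_pmf_deriv)
  also have "\<dots> = 2 * \<delta>\<^sup>2 * (\<Sum>i<q. \<Sum>j=1..k i. lam i j) * tc_pmf q k lam \<delta> \<gamma> n t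
         - 2 * \<delta>\<^sup>2 * (\<Sum>i<q. \<Sum>j=1..k i. lam i j * tc_pmf_shift q k lam \<delta> \<gamma> n i j t)"
    unfolding forward_integral by (simp add: algebra_simps)
  finally show ?thesis .
qed

lemma tc_pmf_has_derivative:
  assumes "\<forall>i<q. \<forall>j\<in>{1..k i}. 0 \<le> lam i j" and "0 < \<delta>" "0 < \<gamma>" "0 < t"
  shows "(tc_pmf q k lam \<delta> \<gamma> n has_real_derivative
           (LINT x:{0<..}|lborel. mgcp_pmf q k lam n x * ig_dt \<delta> \<gamma> x t)) (at t)"
  unfolding tc_pmf_def[abs_def] using assms
  by (intro has_real_derivative_set_integral_mgcp_pmf[where c = "\<gamma>\<^sup>2 / 2"]
      locally_exp_dominated_ig_density locally_exp_dominated_ig_dt ig_density_has_derivative_t) auto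

lemma deriv_tc_pmf_has_derivative:
  assumes "\<forall>i<q. \<forall>j\<in>{1..k i}. 0 \<le> lam i j" and "0 < \<delta>" "0 < \<gamma>" "0 < t"
  shows "(deriv (tc_pmf q k lam \<delta> \<gamma> n) has_real_derivative
           (LINT x:{0<..}|lborel. mgcp_pmf q k lam n x * ig_dtt \<delta> \<gamma> x t)) (at t)"
proof (rule has_field_derivative_transform_within_open[where S = "{0<..}"])
  show "((\<lambda>t. LINT x:{0<..}|lborel. mgcp_pmf q k lam n x * ig_dt \<delta> \<gamma> x t) has_real_derivative
      (LINT x:{0<..}|lborel. mgcp_pmf q k lam n x * ig_dtt \<delta> \<gamma> x t)) (at t)"
    using assms
    by (intro has_real_derivative_set_integral_mgcp_pmf[where c = "\<gamma>\<^sup>2 / 2"]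
        locally_exp_dominated_ig_dt locally_exp_dominated_ig_dtt ig_dt_has_derivative_t) auto
  show "(LINT x:{0<..}|lborel. mgcp_pmf q k lam n x * ig_dt \<delta> \<gamma> x s) = deriv (tc_pmf q k lam \<delta> \<gamma> n) s"
    if "s \<in> {0<..}" for s
    using assms that by (intro DERIV_imp_deriv[symmetric] tc_pmf_has_derivative) auto
qed (use \<open>0 < t\<close> in auto)

theorem mainTheorem17:
  fixes q :: nat and k :: "nat \<Rightarrow> nat" and lam :: "nat \<Rightarrow> nat \<Rightarrow> real"
    and \<delta> \<gamma> :: real and n :: "nat \<Rightarrow> nat"
  assumes "q \<ge> 1"
    and "\<And>i. i < q \<Longrightarrow> k i \<ge> 1"
    and "\<And>i j. i < q \<Longrightarrow> j \<in> {1..k i} \<Longrightarrow> lam i j > 0"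
    and "\<delta> > 0" and "\<gamma> > 0"
  shows "\<forall>t>0.
     (tc_pmf q k lam \<delta> \<gamma> n) differentiable (at t) \<and>
     (deriv (tc_pmf q k lam \<delta> \<gamma> n)) differentiable (at t) \<and>
     deriv (deriv (tc_pmf q k lam \<delta> \<gamma> n)) t
       - 2 * \<delta> * \<gamma> * deriv (tc_pmf q k lam \<delta> \<gamma> n) t
     = 2 * \<delta>\<^sup>2 * (\<Sum>i<q. \<Sum>j=1..k i. lam i j) * tc_pmf q k lam \<delta> \<gamma> n t
       - 2 * \<delta>\<^sup>2 * (\<Sum>i<q. \<Sum>j=1..k i. lam i j * tc_pmf_shift q k lam \<delta> \<gamma> n i j t)"
proof (intro allI impI)
  fix t :: real assume "0 < t"
  have lam: "\<forall>i<q. \<forall>j\<in>{1..k i}. 0 \<le> lam i j"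
    using assms(3) by (simp add: less_imp_le)
  note first = tc_pmf_has_derivative[OF lam assms(4,5) \<open>0 < t\<close>]
  note second = deriv_tc_pmf_has_derivative[OF lam assms(4,5) \<open>0 < t\<close>]
  show "tc_pmf q k lam \<delta> \<gamma> n differentiable (at t) \<and> deriv (tc_pmf q k lam \<delta> \<gamma> n) differentiable (at t) \<and>
     deriv (deriv (tc_pmf q k lam \<delta> \<gamma> n)) t - 2 * \<delta> * \<gamma> * deriv (tc_pmf q k lam \<delta> \<gamma> n) t
     = 2 * \<delta>\<^sup>2 * (\<Sum>i<q. \<Sum>j=1..k i. lam i j) * tc_pmf q k lam \<delta> \<gamma> n t
       - 2 * \<delta>\<^sup>2 * (\<Sum>i<q. \<Sum>j=1..k i. lam i j * tc_pmf_shift q k lam \<delta> \<gamma> n i j t)"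
    using first second DERIV_imp_deriv[OF first] DERIV_imp_deriv[OF second]
      tc_pmf_kernel_identity[OF lam assms(4,5) \<open>0 < t\<close>]
    by (auto simp: real_differentiable_def)
qed

end
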